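(* Let $\mu$ be a continuous probability measure on $\mathbb{R}^n$ and $\alpha\in[0,1]$. If $S\subset\mathbb{R}^n$ is a compact, connected set with $\mu(S)\ge\max\{\alpha,1-\alpha\}$, then there exists a function $f:S^{n-1}\to\mathbb{R}^n$ such that $\mu\big(H^+_{v,\langle v,f(v)\rangle}\big)=\alpha$ for all $v\in S^{n-1}$ and $\operatorname{Im} f\subset S$.
   Context: A continuous probability measure on $\mathbb{R}^n$ is a Borel probability measure absolutely continuous with respect to Lebesgue measure. For $v\ne 0$, $\lambda\in\mathbb{R}$: $H^+_{v,\lambda}=\{x\in\mathbb{R}^n:\langle x,v\rangle\ge\lambda\}$. *)

theory Defs
  imports "HOL-Analysis.Analysis" "HOL-Probability.Probability"
begin

definition halfspace_plus :: "'a::euclidean_space \<Rightarrow> real \<Rightarrow> 'a set" where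
  "halfspace_plus v l = {x. inner x v \<ge> l}"

definition continuous_prob_measure :: "'a::euclidean_space measure \<Rightarrow> bool" where
  "continuous_prob_measure M \<longleftrightarrow>
     prob_space M \<and> sets M = sets borel \<and> absolutely_continuous lborel M"

end

theory Submission
  imports Defs
begin

text \<open>For \<open>v \<noteq> 0\<close>, the map \<open>x \<mapsto> \<mu>(H\<^sup>+\<^sub>v\<^sub>,\<^sub>\<langle>v,x\<rangle>)\<close> is continuous because hyperplanes
  are \<open>\<mu>\<close>-null. On \<open>S\<close> it is at least \<open>\<mu>(S) \<ge> \<alpha>\<close> where \<open>\<langle>v,\<cdot>\<rangle>\<close> is minimal (the halfspace
  contains \<open>S\<close>) and at most \<open>1 - \<mu>(S) \<le> \<alpha>\<close> where \<open>\<langle>v,\<cdot>\<rangle>\<close> is maximal (the halfspace meets \<open>S\<close>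
  only in a hyperplane), so by connectedness of \<open>S\<close> it takes the value \<open>\<alpha>\<close> on \<open>S\<close>.\<close>

lemma hyperplane_null_sets_lborel:
  fixes v :: "'a::euclidean_space"
  assumes "v \<noteq> 0"
  shows "{x. x \<bullet> v = t} \<in> null_sets lborel"
proof -
  have "negligible {x. x \<bullet> v = t}"
    using negligible_hyperplane[of v t] assms by (simp add: inner_commute)
  then have "{x. x \<bullet> v = t} \<in> null_sets lebesgue"
    by (simp add: negligible_iff_null_sets)
  moreover have "{x::'a. x \<bullet> v = t} \<in> sets lborel"
    by simp
  ultimately show ?thesis
    by (simp add: null_sets_completion_iff)
qed

lemma continuous_prob_measure_hyperplane_null_sets:
  fixes M :: "'a::euclidean_space measure"
  assumes "continuous_prob_measure M" "v \<noteq> 0"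
  shows "{x. x \<bullet> v = t} \<in> null_sets M"
  using assms hyperplane_null_sets_lborel[of v t]
  by (auto simp: continuous_prob_measure_def absolutely_continuous_def)

lemma space_continuous_prob_measure:
  fixes M :: "'a::euclidean_space measure"
  assumes "continuous_prob_measure M"
  shows "space M = UNIV"
  using assms sets_eq_imp_space_eq[of M borel] by (simp add: continuous_prob_measure_def)

lemma measure_halfspace_plus_eq_cdf:
  fixes M :: "'a::euclidean_space measure"
  assumes M: "continuous_prob_measure M" and v: "v \<noteq> 0"
  shows "measure M (halfspace_plus v t) = 1 - cdf (distr M borel (\<lambda>x. x \<bullet> v)) t"
proof -
  interpret prob_space M
    using M by (simp add: continuous_prob_measure_def)
  have sets_M: "sets M = sets borel"
    using M by (simp add: continuous_prob_measure_def)
  have space_M: "space M = UNIV"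
    using space_continuous_prob_measure[OF M] .
  have inner_measurable: "(\<lambda>x. x \<bullet> v) \<in> borel_measurable M"
    by (simp add: measurable_cong_sets[OF sets_M refl])
  have below: "{x. x \<bullet> v < t} \<in> sets M"
    by (simp add: sets_M open_Collect_less continuous_intros)
  have "{x. x \<bullet> v \<le> t} = {x. x \<bullet> v < t} \<union> {x. x \<bullet> v = t}"
    by auto
  then have "measure M {x. x \<bullet> v \<le> t} = measure M {x. x \<bullet> v < t}"
    using measure_Un_null_set[OF below continuous_prob_measure_hyperplane_null_sets[OF M v]]
    by simp
  moreover have "cdf (distr M borel (\<lambda>x. x \<bullet> v)) t = measure M {x. x \<bullet> v \<le> t}"
    using inner_measurable by (simp add: cdf_def measure_distr space_M vimage_def)
  moreover have "halfspace_plus v t = space M - {x. x \<bullet> v < t}"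
    by (auto simp: halfspace_plus_def space_M)
  ultimately show ?thesis
    using prob_compl[OF below] by simp
qed

lemma continuous_measure_halfspace_plus:
  fixes M :: "'a::euclidean_space measure"
  assumes M: "continuous_prob_measure M" and v: "v \<noteq> 0"
  shows "continuous_on UNIV (\<lambda>t. measure M (halfspace_plus v t))"
proof -
  interpret prob_space M
    using M by (simp add: continuous_prob_measure_def)
  have sets_M: "sets M = sets borel"
    using M by (simp add: continuous_prob_measure_def)
  have space_M: "space M = UNIV"
    using space_continuous_prob_measure[OF M] .
  define N where "N = distr M borel (\<lambda>x. x \<bullet> v)"
  have inner_measurable: "random_variable borel (\<lambda>x. x \<bullet> v)"
    by (simp add: measurable_cong_sets[OF sets_M refl])
  interpret N: real_distribution N
    unfolding N_def using inner_measurable by simp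
  have "measure N {t} = 0" for t
    using inner_measurable continuous_prob_measure_hyperplane_null_sets[OF M v, of t]
    by (simp add: N_def measure_distr space_M vimage_def measure_eq_0_null_sets)
  then have "continuous_on UNIV (cdf N)"
    by (simp add: N.isCont_cdf continuous_on_eq_continuous_at)
  then show ?thesis
    by (simp add: measure_halfspace_plus_eq_cdf[OF M v] N_def[symmetric] continuous_intros)
qed

lemma exists_halfspace_plus_measure_eq:
  fixes M :: "'a::euclidean_space measure" and S :: "'a set"
  assumes M: "continuous_prob_measure M" and v: "v \<noteq> 0"
    and "compact S" "connected S"
    and S_large: "measure M S \<ge> max \<alpha> (1 - \<alpha>)"
  shows "\<exists>x\<in>S. measure M (halfspace_plus v (v \<bullet> x)) = \<alpha>"
proof -
  interpret prob_space M
    using M by (simp add: continuous_prob_measure_def)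
  have sets_M: "sets M = sets borel"
    using M by (simp add: continuous_prob_measure_def)
  have space_M: "space M = UNIV"
    using space_continuous_prob_measure[OF M] .
  have S_sets: "S \<in> sets M"
    using \<open>compact S\<close> by (simp add: sets_M compact_imp_closed)
  have "S \<noteq> {}"
    using S_large by (auto split: if_splits simp: max_def)
  define g where "g x = measure M (halfspace_plus v (v \<bullet> x))" for x
  have "continuous_on S g"
    unfolding g_def
    by (rule continuous_on_compose2[OF continuous_measure_halfspace_plus[OF M v]])
       (auto intro: continuous_intros)
  have inner_continuous: "continuous_on S (\<lambda>x. x \<bullet> v)"
    by (intro continuous_intros)
  obtain a where a: "a \<in> S" "\<And>y. y \<in> S \<Longrightarrow> a \<bullet> v \<le> y \<bullet> v"
    using continuous_attains_inf[OF \<open>compact S\<close> \<open>S \<noteq> {}\<close> inner_continuous] by blast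
  obtain b where b: "b \<in> S" "\<And>y. y \<in> S \<Longrightarrow> y \<bullet> v \<le> b \<bullet> v"
    using continuous_attains_sup[OF \<open>compact S\<close> \<open>S \<noteq> {}\<close> inner_continuous] by blast
  have "\<alpha> \<le> g a"
  proof -
    have "S \<subseteq> halfspace_plus v (v \<bullet> a)"
      using a(2) by (auto simp: halfspace_plus_def inner_commute)
    then have "measure M S \<le> g a"
      unfolding g_def
      by (intro finite_measure_mono)
         (auto simp: sets_M halfspace_plus_def closed_Collect_le continuous_intros)
    then show ?thesis
      using S_large by simp
  qed
  moreover have "g b \<le> \<alpha>"
  proof -
    have hyperplane: "{x. x \<bullet> v = b \<bullet> v} \<in> null_sets M"
      using continuous_prob_measure_hyperplane_null_sets[OF M v] .
    have "halfspace_plus v (v \<bullet> b) \<subseteq> (space M - S) \<union> {x. x \<bullet> v = b \<bullet> v}"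
      using b(2) by (force simp: halfspace_plus_def inner_commute space_M)
    then have "g b \<le> measure M ((space M - S) \<union> {x. x \<bullet> v = b \<bullet> v})"
      unfolding g_def using S_sets hyperplane
      by (intro finite_measure_mono) (auto simp: null_setsD2)
    also have "\<dots> = 1 - measure M S"
      using measure_Un_null_set[OF _ hyperplane] S_sets prob_compl by auto
    finally show ?thesis
      using S_large by simp
  qed
  moreover have "connected (g ` S)"
    using connected_continuous_image[OF \<open>continuous_on S g\<close> \<open>connected S\<close>] .
  ultimately have "\<alpha> \<in> g ` S"
    using a(1) b(1) unfolding connected_iff_interval by blast
  then show ?thesis
    by (auto simp: g_def)
qed

theorem mainTheorem4:
  fixes M :: "'a::euclidean_space measure" and S :: "'a set" and \<alpha> :: real
  assumes "continuous_prob_measure M"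
    and "\<alpha> \<in> {0..1}"
    and "compact S" and "connected S"
    and "measure M S \<ge> max \<alpha> (1 - \<alpha>)"
  shows "\<exists>f :: 'a \<Rightarrow> 'a.
           (\<forall>v \<in> sphere 0 1. measure M (halfspace_plus v (inner v (f v))) = \<alpha>)
           \<and> f ` sphere 0 1 \<subseteq> S"
proof -
  have "\<forall>v \<in> sphere 0 1. \<exists>x. x \<in> S \<and> measure M (halfspace_plus v (inner v x)) = \<alpha>"
  proof
    fix v :: 'a
    assume "v \<in> sphere 0 1"
    then have "v \<noteq> 0"
      by auto
    then show "\<exists>x. x \<in> S \<and> measure M (halfspace_plus v (inner v x)) = \<alpha>"
      using exists_halfspace_plus_measure_eq[OF assms(1) _ assms(3-5)] by blast
  qed
  then obtain f where "\<forall>v \<in> sphere 0 1. f v \<in> S \<and> measure M (halfspace_plus v (inner v (f v))) = \<alpha>"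
    by (metis bchoice)
  then show ?thesis
    by blast
qed

end
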